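(* Let $f:\mathbb{P}^2\to\mathbb{P}^2$ be a holomorphic map and $\ell\subset\mathbb{P}^2$ a line with $f(\ell)\subset\ell$. Suppose that the fixed points $p_1,\dots,p_k$ of $f|_\ell$ are all simple. Let $\lambda_i,\mu_i$ be the eigenvalues of $Df|_{p_i}$, with $\lambda_i$ the eigenvalue tangent to $\ell$ (i.e. $\lambda_i=(f|_\ell)'(p_i)$). Then $$\sum_{i=1}^k\frac{1-\mu_i}{1-\lambda_i}=1.$$
   Context: A fixed point $p$ of $f|_\ell:\ell\to\ell$ is simple if $(f|_\ell)'(p)\neq1$. Since $\ell$ is invariant, $T_p\ell$ is an invariant subspace of $Df|_p$, so the eigenvalue $\lambda_i$ along $\ell$ and the other eigenvalue $\mu_i$ are well defined. *)

theory Defs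
  imports "HOL-Analysis.Analysis"
begin

text \<open>Points of P^2 are represented by nonzero homogeneous coordinate vectors in complex^3.\<close>

definition monom3 :: "nat \<times> nat \<times> nat \<Rightarrow> complex^3 \<Rightarrow> complex" where
  "monom3 e z = z$1 ^ fst e * z$2 ^ fst (snd e) * z$3 ^ snd (snd e)"

definition exps :: "nat \<Rightarrow> (nat \<times> nat \<times> nat) set" where
  "exps d = {e. fst e + fst (snd e) + snd (snd e) = d}"

definition hom_poly_map :: "nat \<Rightarrow> (complex^3 \<Rightarrow> complex^3) \<Rightarrow> bool" where
  "hom_poly_map d F \<longleftrightarrow>
     (\<exists>C :: 3 \<Rightarrow> nat \<times> nat \<times> nat \<Rightarrow> complex.
        \<forall>z i. F z $ i = (\<Sum>e\<in>exps d. C i e * monom3 e z))"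

text \<open>Homogeneous lift of a holomorphic map P^2 -> P^2 of algebraic degree d
  (by Chow's theorem every holomorphic self-map of P^2 arises this way).\<close>
definition holo_P2_lift :: "nat \<Rightarrow> (complex^3 \<Rightarrow> complex^3) \<Rightarrow> bool" where
  "holo_P2_lift d F \<longleftrightarrow> hom_poly_map d F \<and> (\<forall>z. F z = 0 \<longrightarrow> z = 0)"

text \<open>Linear form defining a line: the line is {[z] . lf a z = 0}, a \<noteq> 0.\<close>
definition lf :: "complex^3 \<Rightarrow> complex^3 \<Rightarrow> complex" where
  "lf a z = (\<Sum>i\<in>UNIV. a$i * z$i)"

definition proj_eq :: "complex^3 \<Rightarrow> complex^3 \<Rightarrow> bool" where
  "proj_eq p q \<longleftrightarrow> p \<noteq> 0 \<and> q \<noteq> 0 \<and> (\<exists>t::complex. q = t *s p)"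

definition line_fixed :: "complex^3 \<Rightarrow> (complex^3 \<Rightarrow> complex^3) \<Rightarrow> complex^3 \<Rightarrow> bool" where
  "line_fixed a F p \<longleftrightarrow> p \<noteq> 0 \<and> lf a p = 0 \<and> (\<exists>c::complex. F p = c *s p)"

definition fix_mult :: "(complex^3 \<Rightarrow> complex^3) \<Rightarrow> complex^3 \<Rightarrow> complex" where
  "fix_mult F p = (SOME c. F p = c *s p)"

text \<open>At a fixed point [p] with F p = c p, Df on T_[p] P^2 = C^3 / C p is the map
  induced by (1/c) DF(p).\<close>
definition lin_at :: "(complex^3 \<Rightarrow> complex^3) \<Rightarrow> complex^3 \<Rightarrow> complex^3 \<Rightarrow> complex^3" where
  "lin_at F p v = inverse (fix_mult F p) *s frechet_derivative F (at p) v"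

text \<open>lam is the eigenvalue of Df at [p] along the tangent line T_p l, i.e. (f|_l)'(p).\<close>
definition tangent_eig :: "complex^3 \<Rightarrow> (complex^3 \<Rightarrow> complex^3) \<Rightarrow> complex^3 \<Rightarrow> complex \<Rightarrow> bool" where
  "tangent_eig a F p lam \<longleftrightarrow>
     (\<exists>v. lf a v = 0 \<and> \<not> (\<exists>t::complex. v = t *s p) \<and>
          (\<exists>\<alpha>::complex. lin_at F p v = lam *s v + \<alpha> *s p))"

text \<open>lam, mu are the two eigenvalues (with multiplicity) of Df at [p]: the
  characteristic polynomial of the induced map on C^3 / C p is (x-lam)(x-mu).\<close>
definition eig_pair :: "(complex^3 \<Rightarrow> complex^3) \<Rightarrow> complex^3 \<Rightarrow> complex \<Rightarrow> complex \<Rightarrow> bool" where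
  "eig_pair F p lam mu \<longleftrightarrow>
     (\<exists>v w. (\<forall>x y z::complex. x *s p + y *s v + z *s w = 0 \<longrightarrow> x = 0 \<and> y = 0 \<and> z = 0) \<and>
        (\<exists>a11 a12 a21 a22 \<alpha> \<beta> :: complex.
           lin_at F p v = \<alpha> *s p + a11 *s v + a21 *s w \<and>
           lin_at F p w = \<beta> *s p + a12 *s v + a22 *s w \<and>
           a11 + a22 = lam + mu \<and> a11 * a22 - a12 * a21 = lam * mu))"

end

theory Submission
  imports Defs "HOL-Computational_Algebra.Fundamental_Theorem_Algebra"
begin

text \<open>Take \<open>u1, u2\<close> spanning the plane over the invariant line \<open>\<ell>\<close>, with \<open>[u1]\<close> not fixed,
  and parametrise \<open>\<ell> - {[u1]}\<close> by \<open>x \<mapsto> [x u1 + u2]\<close>.  Writing \<open>F (x u1 + u2) = P(x) u1 + Q(x) u2\<close>,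
  the fixed points on \<open>\<ell>\<close> are the roots of \<open>r = x Q - P\<close>, a polynomial of degree \<open>d + 1\<close> whose
  leading coefficient is that of \<open>Q\<close>.  At a root, \<open>\<lambda> = 1 - r'/Q\<close>; as \<open>Df\<close> preserves \<open>T\<ell>\<close>,
  \<open>\<mu>\<close> is the factor by which it acts on the normal direction, which is \<open>N/Q\<close> with
  \<open>N(x) = a \<bullet> DF (x u1 + u2) u3\<close> of degree \<open>< d\<close>.  So \<open>(1 - \<mu>)/(1 - \<lambda>) = (Q - N)/r'\<close>, and summing
  \<open>g/r'\<close> over the simple roots of \<open>r\<close> for \<open>deg g < deg r\<close> gives the coefficient of \<open>x\<^sup>d\<close> in \<open>g\<close>
  divided by the leading coefficient of \<open>r\<close> (the residue theorem for \<open>g/r\<close>), which here is 1.\<close>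

section \<open>Linear forms and cross products in complex 3-space\<close>

lemma lf_add: "lf a (x + y) = lf a x + lf a y"
  by (simp add: lf_def sum.distrib algebra_simps)

lemma lf_smult: "lf a (k *s x) = k * lf a x"
  by (simp add: lf_def sum_distrib_left algebra_simps)

lemma lf_zero [simp]: "lf a 0 = 0"
  by (simp add: lf_def)

lemma lf_lincomb: "lf b (x *s u + y *s w) = x * lf b u + y * lf b w"
  by (simp add: lf_add lf_smult)

lemma lf_expand: "lf a z = a$1 * z$1 + a$2 * z$2 + a$3 * z$3"
  by (simp add: lf_def sum_3)

lemma vec3_eq_iff: "(x::complex^3) = y \<longleftrightarrow> x$1 = y$1 \<and> x$2 = y$2 \<and> x$3 = y$3"
  by (simp add: vec_eq_iff forall_3)

definition ccross :: "complex^3 \<Rightarrow> complex^3 \<Rightarrow> complex^3" where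
  "ccross x y = vector [x$2*y$3 - x$3*y$2, x$3*y$1 - x$1*y$3, x$1*y$2 - x$2*y$1]"

lemma ccross_nth [simp]:
  "ccross x y $ 1 = x$2*y$3 - x$3*y$2"
  "ccross x y $ 2 = x$3*y$1 - x$1*y$3"
  "ccross x y $ 3 = x$1*y$2 - x$2*y$1"
  by (simp_all add: ccross_def)

text \<open>Cramer's rule: if the determinant of \<open>u1, u2, u3\<close> is 1, the forms \<open>ccross u2 u3\<close>,
  \<open>ccross u3 u1\<close>, \<open>ccross u1 u2\<close> are the dual basis.\<close>

lemma ccross_decomp:
  assumes "lf (ccross u1 u2) u3 = 1"
  shows "z = lf (ccross u2 u3) z *s u1 + lf (ccross u3 u1) z *s u2 + lf (ccross u1 u2) z *s u3"
  using assms unfolding vec3_eq_iff lf_expand by (simp add: algebra_simps) algebra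

lemma ccross_dual:
  assumes "lf (ccross u1 u2) u3 = 1"
  shows "lf (ccross u2 u3) u1 = 1" "lf (ccross u2 u3) u2 = 0" "lf (ccross u2 u3) u3 = 0"
    "lf (ccross u3 u1) u1 = 0" "lf (ccross u3 u1) u2 = 1" "lf (ccross u3 u1) u3 = 0"
    "lf (ccross u1 u2) u1 = 0" "lf (ccross u1 u2) u2 = 0"
  using assms unfolding lf_expand by (simp_all add: algebra_simps)

lemma ccross_affine_shift: "ccross (x *s u1 + u2) (- u1) = ccross u1 u2"
  by (simp add: vec3_eq_iff algebra_simps)

lemma exists_ccross_frame:
  assumes "(a::complex^3) \<noteq> 0"
  shows "\<exists>u1 u2 u3. ccross u1 u2 = a \<and> lf a u3 = 1"
proof -
  have "a$1 \<noteq> 0 \<or> a$2 \<noteq> 0 \<or> a$3 \<noteq> 0" using assms by (auto simp: vec3_eq_iff)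
  then show ?thesis
  proof (elim disjE)
    assume h: "a$1 \<noteq> 0"
    show ?thesis
      by (rule exI[of _ "vector [-a$2/a$1, 1, 0]"], rule exI[of _ "vector [-a$3, 0, a$1]"],
          rule exI[of _ "vector [1/a$1, 0, 0]"]) (use h in \<open>simp add: vec3_eq_iff lf_expand field_simps\<close>)
  next
    assume h: "a$2 \<noteq> 0"
    show ?thesis
      by (rule exI[of _ "vector [0, -a$3/a$2, 1]"], rule exI[of _ "vector [a$2, -a$1, 0]"],
          rule exI[of _ "vector [0, 1/a$2, 0]"]) (use h in \<open>simp add: vec3_eq_iff lf_expand field_simps\<close>)
  next
    assume h: "a$3 \<noteq> 0"
    show ?thesis
      by (rule exI[of _ "vector [1, 0, -a$1/a$3]"], rule exI[of _ "vector [0, a$3, -a$2]"],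
          rule exI[of _ "vector [0, 0, 1/a$3]"]) (use h in \<open>simp add: vec3_eq_iff lf_expand field_simps\<close>)
  qed
qed

lemma independent3_spans:
  fixes p v w :: "complex^3"
  assumes ind: "\<forall>x y z::complex. x *s p + y *s v + z *s w = 0 \<longrightarrow> x = 0 \<and> y = 0 \<and> z = 0"
  shows "\<exists>x y z. t = x *s p + y *s v + z *s w"
proof -
  define A :: "complex^3^3" where "A = (\<chi> i j. (if j = 1 then p else if j = 2 then v else w) $ i)"
  have A_mult: "A *v c = c$1 *s p + c$2 *s v + c$3 *s w" for c
    unfolding vec3_eq_iff by (simp add: A_def matrix_vector_mult_def sum_3 algebra_simps)
  have "\<forall>c. A *v c = 0 \<longrightarrow> c = 0"
  proof (intro allI impI)
    fix c :: "complex^3" assume "A *v c = 0"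
    then have "c$1 = 0 \<and> c$2 = 0 \<and> c$3 = 0" using ind unfolding A_mult by blast
    then show "c = 0" by (simp add: vec3_eq_iff)
  qed
  then obtain B where "B ** A = mat 1" using matrix_left_invertible_ker by blast
  then have "A ** B = mat 1" using matrix_left_right_inverse by blast
  then have "A *v (B *v t) = t" by (metis matrix_vector_mul_assoc matrix_vector_mul_lid)
  then show ?thesis unfolding A_mult by metis
qed

section \<open>The trace of a map with an invariant line\<close>

lemma trace_eq_eigenvalue_sum:
  fixes y z a11 a12 a21 a22 l \<nu> L1 L2 :: complex
  assumes r1: "y*a11 + z*a12 = l*y" and r2: "y*a21 + z*a22 = l*z"
    and l1: "a11*L1 + a21*L2 = \<nu>*L1" and l2: "a12*L1 + a22*L2 = \<nu>*L2"
    and orth: "y*L1 + z*L2 = 0" and yz: "y \<noteq> 0 \<or> z \<noteq> 0" and L: "L1 \<noteq> 0 \<or> L2 \<noteq> 0"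
  shows "a11 + a22 = l + \<nu>"
proof -
  define T where "T = a11 + a22 - l - \<nu>"
  have A: "T*y*L2 = 0" unfolding T_def using r1 l2 orth by algebra
  have B: "T*z*L1 = 0" unfolding T_def using r2 l1 orth by algebra
  have "T = 0"
  proof (rule ccontr)
    assume "T \<noteq> 0"
    then have "y*L2 = 0" and "z*L1 = 0" using A B by (simp_all add: mult.assoc)
    then show False using yz L orth by auto
  qed
  then show ?thesis unfolding T_def by algebra
qed

text \<open>The map induced by \<open>L\<close> on \<open>\<complex>\<^sup>3 / \<complex> p\<close> has the eigenvalue \<open>l\<close> on \<open>ker a / \<complex> p\<close> and acts
  by \<open>\<nu>\<close> on the quotient by it, so its trace is \<open>l + \<nu>\<close>.\<close>

lemma trace_induced_map:
  fixes L :: "complex^3 \<Rightarrow> complex^3"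
  assumes L_add: "\<And>v w. L (v + w) = L v + L w" and L_smult: "\<And>x v. L (x *s v) = x *s L v"
    and Lp: "L p = \<delta> *s p" and ap: "lf a p = 0" and lf_L: "\<And>y. lf a (L y) = \<nu> * lf a y"
    and transversal: "lf a e \<noteq> 0"
    and t: "lf a t = 0" "\<not> (\<exists>s. t = s *s p)" "L t = l *s t + \<beta> *s p"
    and ind: "\<forall>x y z::complex. x *s p + y *s v + z *s w = 0 \<longrightarrow> x = 0 \<and> y = 0 \<and> z = 0"
    and Lv: "L v = \<alpha> *s p + a11 *s v + a21 *s w" and Lw: "L w = \<beta>' *s p + a12 *s v + a22 *s w"
  shows "a11 + a22 = l + \<nu>"
proof -
  obtain x y z where t_coords: "t = x *s p + y *s v + z *s w" using independent3_spans[OF ind] by blast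
  have E: "(x*\<delta> + y*\<alpha> + z*\<beta>' - l*x - \<beta>) *s p + (y*a11 + z*a12 - l*y) *s v
      + (y*a21 + z*a22 - l*z) *s w = L t - (l *s t + \<beta> *s p)"
    unfolding t_coords L_add L_smult Lp Lv Lw by (simp add: vec_eq_iff algebra_simps)
  have "(x*\<delta> + y*\<alpha> + z*\<beta>' - l*x - \<beta>) *s p + (y*a11 + z*a12 - l*y) *s v
      + (y*a21 + z*a22 - l*z) *s w = 0"
    unfolding E t(3) by simp
  then have "y*a11 + z*a12 - l*y = 0 \<and> y*a21 + z*a22 - l*z = 0" using ind by blast
  then have right: "y*a11 + z*a12 = l*y" "y*a21 + z*a22 = l*z" by simp_all
  have yz: "y \<noteq> 0 \<or> z \<noteq> 0" using t(2) t_coords by auto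
  have lf_coords: "lf a (c1 *s p + c2 *s v + c3 *s w) = c2 * lf a v + c3 * lf a w" for c1 c2 c3
    by (simp add: lf_add lf_smult ap)
  have left: "a11 * lf a v + a21 * lf a w = \<nu> * lf a v" "a12 * lf a v + a22 * lf a w = \<nu> * lf a w"
    using lf_L[of v] lf_L[of w] unfolding Lv Lw lf_coords by simp_all
  have orth: "y * lf a v + z * lf a w = 0" using t(1) unfolding t_coords lf_coords .
  obtain x' y' z' where "e = x' *s p + y' *s v + z' *s w" using independent3_spans[OF ind] by blast
  then have "lf a v \<noteq> 0 \<or> lf a w \<noteq> 0" using transversal lf_coords by auto
  then show ?thesis using trace_eq_eigenvalue_sum[OF right left orth yz] by simp
qed

section \<open>Polynomials\<close>

lemma coeff_mult_at_degree_bounds: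
  fixes p q :: "'a::comm_semiring_1 poly"
  assumes "degree p \<le> m" "degree q \<le> n"
  shows "coeff (p * q) (m + n) = coeff p m * coeff q n"
proof -
  have "coeff p i * coeff q (m + n - i) = 0" if "i \<noteq> m" for i
    using assms that by (cases "i < m") (auto simp: coeff_eq_0)
  then have "(\<Sum>i\<in>{..m+n} - {m}. coeff p i * coeff q (m + n - i)) = 0"
    by (intro sum.neutral) auto
  then have "(\<Sum>i\<le>m+n. coeff p i * coeff q (m + n - i)) = coeff p m * coeff q n"
    by (subst sum.remove[of _ m]) auto
  then show ?thesis by (simp add: coeff_mult)
qed

lemma degree_linear_power_le: "degree ([:b, a:] ^ k) \<le> k"
  by (rule order.trans[OF degree_power_le]) auto

lemma coeff_linear_power: "coeff ([:b, a:] ^ k) k = a ^ k"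
proof (induction k)
  case (Suc k)
  have "coeff ([:b, a:] * [:b, a:] ^ k) (1 + k) = coeff [:b,a:] 1 * coeff ([:b, a:] ^ k) k"
    by (rule coeff_mult_at_degree_bounds) (auto simp: degree_linear_power_le)
  then show ?case using Suc by simp
qed simp

lemma poly_eq_0_if_finite_nonroots:
  fixes p :: "'a::{idom, ring_char_0} poly"
  assumes "finite {x. poly p x \<noteq> 0}"
  shows "p = 0"
proof (rule ccontr)
  assume "p \<noteq> 0"
  have "UNIV = {x. poly p x = 0} \<union> {x. poly p x \<noteq> 0}" by auto
  then have "finite (UNIV :: 'a set)" using assms poly_roots_finite[OF \<open>p \<noteq> 0\<close>] by (metis finite_Un)
  then show False using infinite_UNIV_char_0 by blast
qed

lemma degree_prod_linear: "finite (T :: 'a::idom set) \<Longrightarrow> degree (\<Prod>y\<in>T. [:-y, 1:]) = card T"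
  by (subst degree_prod_eq_sum_degree) auto

lemma coeff_prod_linear: "finite (T :: 'a::idom set) \<Longrightarrow> coeff (\<Prod>y\<in>T. [:-y, 1:]) (card T) = 1"
  using lead_coeff_prod[of "\<lambda>y. [:-y, 1:]" T] by (simp add: degree_prod_linear)

lemma poly_pderiv_prod_linear_at_root:
  fixes S :: "'a::idom set"
  assumes "finite S" "x \<in> S"
  shows "poly (pderiv (\<Prod>y\<in>S. [:-y, 1:])) x = (\<Prod>y\<in>S-{x}. (x - y))"
proof -
  have "(\<Sum>b\<in>S-{x}. \<Prod>y\<in>S-{b}. (x - y)) = 0"
    using assms by (intro sum.neutral) (auto simp: prod_zero_iff)
  then have "(\<Sum>b\<in>S. \<Prod>y\<in>S-{b}. (x - y)) = (\<Prod>y\<in>S-{x}. (x - y))"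
    using assms by (subst sum.remove[of _ x]) auto
  then show ?thesis by (simp add: pderiv_prod poly_sum poly_prod pderiv_pCons)
qed

text \<open>Comparing the coefficients of \<open>x\<^sup>n\<^sup>-\<^sup>1\<close> in the Lagrange interpolation formula.\<close>

lemma lagrange_sum_eq_coeff:
  fixes S :: "'a::field set" and g :: "'a poly"
  assumes fin: "finite S" and ne: "S \<noteq> {}" and deg: "degree g < card S"
  shows "(\<Sum>x\<in>S. poly g x / (\<Prod>y\<in>S-{x}. (x - y))) = coeff g (card S - 1)"
proof -
  define n where "n = card S"
  have card_remove: "card (S - {x}) = n - 1" if "x \<in> S" for x
    using that fin by (simp add: n_def)
  define L where "L = (\<Sum>x\<in>S. smult (poly g x / (\<Prod>y\<in>S-{x}. (x - y))) (\<Prod>y\<in>S-{x}. [:-y, 1:]))"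
  have poly_L: "poly L z = poly g z" if z: "z \<in> S" for z
  proof -
    have "(\<Sum>x\<in>S-{z}. poly g x / (\<Prod>y\<in>S-{x}. (x - y)) * (\<Prod>y\<in>S-{x}. (z - y))) = 0"
      using fin z by (intro sum.neutral) (auto simp: prod_zero_iff)
    moreover have "(\<Prod>y\<in>S-{z}. (z - y)) \<noteq> 0"
      using fin by (auto simp: prod_zero_iff)
    ultimately show ?thesis
      using fin z by (simp add: L_def poly_sum poly_prod sum.remove[of _ z])
  qed
  have "degree L \<le> n - 1"
    unfolding L_def
    by (intro degree_sum_le order.trans[OF degree_smult_le]) (auto simp: degree_prod_linear fin n_def)
  then have deg_diff: "degree (g - L) \<le> n - 1"
    using deg by (intro degree_diff_le) (auto simp: n_def)
  have "g - L = 0"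
  proof (rule ccontr)
    assume nz: "g - L \<noteq> 0"
    have "card S \<le> card {x. poly (g - L) x = 0}"
      using poly_L poly_roots_finite[OF nz] by (intro card_mono) auto
    also have "\<dots> \<le> degree (g - L)" by (rule card_poly_roots_bound[OF nz])
    finally have "card S \<le> card S - 1" using deg_diff n_def by simp
    moreover have "card S > 0" using fin ne by (simp add: card_gt_0_iff)
    ultimately show False by linarith
  qed
  then have "g = L" by simp
  have "coeff (\<Prod>y\<in>S-{x}. [:-y, 1:]) (n - 1) = 1" if "x \<in> S" for x
    using coeff_prod_linear[of "S - {x}"] fin card_remove[OF that] by simp
  then have "coeff L (n - 1) = (\<Sum>x\<in>S. poly g x / (\<Prod>y\<in>S-{x}. (x - y)))"
    by (simp add: L_def coeff_sum cong: sum.cong)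
  then show ?thesis using \<open>g = L\<close> n_def by simp
qed

text \<open>The residue theorem for \<open>g / r\<close> on the Riemann sphere, in its algebraic form.\<close>

lemma sum_roots_div_pderiv:
  fixes r g :: "complex poly"
  assumes sqf: "rsquarefree r" and deg: "degree g < degree r"
  shows "(\<Sum>x\<in>{x. poly r x = 0}. poly g x / poly (pderiv r) x) = coeff g (degree r - 1) / lead_coeff r"
proof -
  define S where "S = {x. poly r x = 0}"
  define c where "c = lead_coeff r"
  have "r \<noteq> 0" using sqf by (simp add: rsquarefree_def)
  then have fin: "finite S" and c: "c \<noteq> 0" by (simp_all add: S_def c_def poly_roots_finite)
  have r_eq: "r = smult c (\<Prod>z\<in>S. [:-z, 1:])"
    using complex_poly_decompose_rsquarefree[OF sqf] unfolding S_def c_def by simp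
  have card: "card S = degree r"
    using r_eq c by (metis degree_smult_eq degree_prod_linear[OF fin])
  then have "S \<noteq> {}" using deg by auto
  have "poly (pderiv r) x = c * (\<Prod>y\<in>S-{x}. (x - y))" if "x \<in> S" for x
    by (subst r_eq) (simp add: pderiv_smult poly_pderiv_prod_linear_at_root[OF fin that])
  then have "(\<Sum>x\<in>S. poly g x / poly (pderiv r) x) = (\<Sum>x\<in>S. poly g x / (\<Prod>y\<in>S-{x}. (x - y))) / c"
    by (simp add: sum_divide_distrib mult.commute cong: sum.cong)
  also have "\<dots> = coeff g (degree r - 1) / c"
    using lagrange_sum_eq_coeff[OF fin \<open>S \<noteq> {}\<close>] deg card by simp
  finally show ?thesis unfolding S_def c_def .
qed

section \<open>Monomials in three variables\<close>

lemma finite_exps: "finite (exps d)"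
proof -
  have "exps d \<subseteq> {..d} \<times> {..d} \<times> {..d}" by (auto simp: exps_def)
  then show ?thesis by (rule finite_subset) auto
qed

definition dmonom3 :: "nat \<times> nat \<times> nat \<Rightarrow> complex^3 \<Rightarrow> complex^3 \<Rightarrow> complex" where
  "dmonom3 e z w =
       of_nat (fst e) * z$1^(fst e - 1) * w$1 * z$2^fst (snd e) * z$3^snd (snd e)
     + of_nat (fst (snd e)) * z$1^fst e * z$2^(fst (snd e) - 1) * w$2 * z$3^snd (snd e)
     + of_nat (snd (snd e)) * z$1^fst e * z$2^fst (snd e) * z$3^(snd (snd e) - 1) * w$3"

lemma monom3_has_derivative: "(monom3 e has_derivative dmonom3 e z) (at z)"
proof -
  have "((\<lambda>z. z$1 ^ fst e * z$2 ^ fst (snd e) * z$3 ^ snd (snd e)) has_derivative dmonom3 e z) (at z)"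
    by (rule derivative_eq_intros bounded_linear.has_derivative[OF bounded_linear_vec_nth]
        has_derivative_ident refl)+
       (auto simp: dmonom3_def algebra_simps)
  then show ?thesis unfolding monom3_def[abs_def] .
qed

lemma monom3_line_has_field_derivative:
  "((\<lambda>x. monom3 e (x *s u + v)) has_field_derivative dmonom3 e (x *s u + v) u) (at x)"
proof -
  have "((\<lambda>x. (x * u$1 + v$1) ^ fst e * (x * u$2 + v$2) ^ fst (snd e) * (x * u$3 + v$3) ^ snd (snd e))
     has_field_derivative dmonom3 e (x *s u + v) u) (at x)"
    by (rule derivative_eq_intros refl)+ (simp add: dmonom3_def algebra_simps)
  then show ?thesis by (simp add: monom3_def algebra_simps)
qed

lemma dmonom3_add: "dmonom3 e z (v + w) = dmonom3 e z v + dmonom3 e z w"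
  by (simp add: dmonom3_def algebra_simps)

lemma dmonom3_smult: "dmonom3 e z (x *s v) = x * dmonom3 e z v"
  by (simp add: dmonom3_def algebra_simps)

lemma dmonom3_euler:
  assumes "e \<in> exps d"
  shows "dmonom3 e z z = of_nat d * monom3 e z"
proof -
  obtain e1 e2 e3 where e: "e = (e1,e2,e3)" by (cases e) auto
  have d: "d = e1 + e2 + e3" using assms by (auto simp: exps_def e)
  have pred: "of_nat k * (x::complex)^(k-1) * x = of_nat k * x^k" for k x
    by (cases k) auto
  have "dmonom3 e z z = (of_nat e1 * z$1^(e1-1) * z$1) * z$2^e2 * z$3^e3
     + (of_nat e2 * z$2^(e2-1) * z$2) * z$1^e1 * z$3^e3 + (of_nat e3 * z$3^(e3-1) * z$3) * z$1^e1 * z$2^e2"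
    by (simp add: dmonom3_def e algebra_simps)
  also have "\<dots> = of_nat d * monom3 e z"
    unfolding pred by (simp add: monom3_def e d algebra_simps)
  finally show ?thesis .
qed

lemma monom3_smult:
  assumes "e \<in> exps d"
  shows "monom3 e (k *s z) = k^d * monom3 e z"
proof -
  obtain e1 e2 e3 where e: "e = (e1,e2,e3)" by (cases e) auto
  have d: "d = e1 + e2 + e3" using assms by (auto simp: exps_def e)
  show ?thesis by (simp add: monom3_def e d power_mult_distrib power_add algebra_simps)
qed

lemma dmonom3_smult_base:
  assumes "e \<in> exps d"
  shows "dmonom3 e (k *s z) w = k^(d-1) * dmonom3 e z w"
proof -
  obtain e1 e2 e3 where e: "e = (e1,e2,e3)" by (cases e) auto
  have d: "d = e1 + e2 + e3" using assms by (auto simp: exps_def e)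
  have pred: "of_nat m * (k * (x::complex))^(m-1) * k^j = k^(d-1) * (of_nat m * x^(m-1))"
    if "d = m + j" for m j x
    using that by (cases m) (simp_all add: power_mult_distrib power_add algebra_simps)
  have p1: "of_nat e1 * (k * z$1)^(e1-1) * k^(e2+e3) = k^(d-1) * (of_nat e1 * z$1^(e1-1))"
    and p2: "of_nat e2 * (k * z$2)^(e2-1) * k^(e1+e3) = k^(d-1) * (of_nat e2 * z$2^(e2-1))"
    and p3: "of_nat e3 * (k * z$3)^(e3-1) * k^(e1+e2) = k^(d-1) * (of_nat e3 * z$3^(e3-1))"
    by (rule pred, simp add: d)+
  have "dmonom3 e (k *s z) w = (of_nat e1 * (k * z$1)^(e1-1) * k^(e2+e3)) * w$1 * z$2^e2 * z$3^e3
     + (of_nat e2 * (k * z$2)^(e2-1) * k^(e1+e3)) * z$1^e1 * w$2 * z$3^e3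
     + (of_nat e3 * (k * z$3)^(e3-1) * k^(e1+e2)) * z$1^e1 * z$2^e2 * w$3"
    by (simp add: dmonom3_def e power_mult_distrib power_add algebra_simps)
  also have "\<dots> = k^(d-1) * dmonom3 e z w"
    unfolding p1 p2 p3 by (simp add: dmonom3_def e algebra_simps)
  finally show ?thesis .
qed

definition line_monom3 :: "complex^3 \<Rightarrow> complex^3 \<Rightarrow> nat \<times> nat \<times> nat \<Rightarrow> complex poly" where
  "line_monom3 u v e = [:v$1, u$1:]^fst e * [:v$2, u$2:]^fst (snd e) * [:v$3, u$3:]^snd (snd e)"

definition line_dmonom3 ::
    "complex^3 \<Rightarrow> complex^3 \<Rightarrow> complex^3 \<Rightarrow> nat \<times> nat \<times> nat \<Rightarrow> complex poly" where
  "line_dmonom3 u v w e =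
       smult (of_nat (fst e) * w$1)
         ([:v$1, u$1:]^(fst e - 1) * [:v$2, u$2:]^fst (snd e) * [:v$3, u$3:]^snd (snd e))
     + smult (of_nat (fst (snd e)) * w$2)
         ([:v$1, u$1:]^fst e * [:v$2, u$2:]^(fst (snd e) - 1) * [:v$3, u$3:]^snd (snd e))
     + smult (of_nat (snd (snd e)) * w$3)
         ([:v$1, u$1:]^fst e * [:v$2, u$2:]^fst (snd e) * [:v$3, u$3:]^(snd (snd e) - 1))"

lemma poly_line_monom3: "poly (line_monom3 u v e) x = monom3 e (x *s u + v)"
  by (simp add: line_monom3_def monom3_def algebra_simps)

lemma poly_line_dmonom3: "poly (line_dmonom3 u v w e) x = dmonom3 e (x *s u + v) w"
  by (simp add: line_dmonom3_def dmonom3_def algebra_simps)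

lemma degree_linear_powers_le:
  "degree ([:b1, a1:]^k1 * [:b2, a2:]^k2 * [:b3, a3:]^k3) \<le> k1 + k2 + k3"
  by (auto intro!: order.trans[OF degree_mult_le] add_mono degree_linear_power_le)

lemma degree_line_monom3: "e \<in> exps d \<Longrightarrow> degree (line_monom3 u v e) \<le> d"
  using degree_linear_powers_le by (auto simp: line_monom3_def exps_def)

lemma coeff_line_monom3:
  assumes "e \<in> exps d"
  shows "coeff (line_monom3 u v e) d = monom3 e u"
proof -
  obtain e1 e2 e3 where e: "e = (e1,e2,e3)" by (cases e) auto
  have d: "d = e1 + e2 + e3" using assms by (auto simp: exps_def e)
  have "coeff ([:v$1, u$1:]^e1 * [:v$2, u$2:]^e2 * [:v$3, u$3:]^e3) (e1 + e2 + e3)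
     = coeff ([:v$1, u$1:]^e1 * [:v$2, u$2:]^e2) (e1 + e2) * coeff ([:v$3, u$3:]^e3) e3"
    by (rule coeff_mult_at_degree_bounds)
       (auto intro!: order.trans[OF degree_mult_le] add_mono degree_linear_power_le)
  also have "coeff ([:v$1, u$1:]^e1 * [:v$2, u$2:]^e2) (e1 + e2) = u$1^e1 * u$2^e2"
    by (subst coeff_mult_at_degree_bounds) (auto simp: degree_linear_power_le coeff_linear_power)
  finally show ?thesis by (simp add: line_monom3_def monom3_def e d coeff_linear_power)
qed

lemma coeff_line_dmonom3:
  assumes "e \<in> exps d"
  shows "coeff (line_dmonom3 u v w e) d = 0" "degree (line_dmonom3 u v w e) \<le> d"
proof -
  obtain e1 e2 e3 where e: "e = (e1,e2,e3)" by (cases e) auto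
  have d: "d = e1 + e2 + e3" using assms by (auto simp: exps_def e)
  have low_coeff: "coeff (smult (of_nat k * c) p) d = 0"
    and low_degree: "degree (smult (of_nat k * c) p) \<le> d"
    if "k = 0 \<or> degree p < d" for k c and p :: "complex poly"
    using that by (auto simp: coeff_eq_0 intro: order.trans[OF degree_smult_le])
  note deg = degree_linear_powers_le[of "v$1" "u$1" _ "v$2" "u$2" _ "v$3" "u$3"]
  have c1: "e1 = 0 \<or> degree ([:v$1, u$1:]^(e1 - 1) * [:v$2, u$2:]^e2 * [:v$3, u$3:]^e3) < d"
    and c2: "e2 = 0 \<or> degree ([:v$1, u$1:]^e1 * [:v$2, u$2:]^(e2 - 1) * [:v$3, u$3:]^e3) < d"
    and c3: "e3 = 0 \<or> degree ([:v$1, u$1:]^e1 * [:v$2, u$2:]^e2 * [:v$3, u$3:]^(e3 - 1)) < d"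
    using deg[of "e1 - 1" e2 e3] deg[of e1 "e2 - 1" e3] deg[of e1 e2 "e3 - 1"] by (auto simp: d)
  show "coeff (line_dmonom3 u v w e) d = 0"
    unfolding line_dmonom3_def e coeff_add fst_conv snd_conv
    by (simp only: low_coeff[OF c1] low_coeff[OF c2] low_coeff[OF c3]) simp
  show "degree (line_dmonom3 u v w e) \<le> d"
    unfolding line_dmonom3_def e fst_conv snd_conv
    using low_degree[OF c1] low_degree[OF c2] low_degree[OF c3] by (auto intro!: degree_add_le)
qed

section \<open>Homogeneous polynomial maps\<close>

lemma fix_mult_eq:
  assumes "F p = c *s p" "p \<noteq> 0"
  shows "fix_mult F p = c"
proof -
  have "F p = fix_mult F p *s p"
    unfolding fix_mult_def using someI[of "\<lambda>c. F p = c *s p" c] assms(1) by simp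
  then have "(fix_mult F p - c) *s p = 0" using assms(1) by (metis vector_sub_rdistrib diff_self)
  then show ?thesis using assms(2) by (metis vector_mul_eq_0 right_minus_eq)
qed

lemma has_derivative_vec_lambda:
  fixes f :: "'n::finite \<Rightarrow> 'a::real_normed_vector \<Rightarrow> complex"
  assumes "\<And>j. (f j has_derivative f' j) (at a)"
  shows "((\<lambda>x. \<chi> j. f j x) has_derivative (\<lambda>h. \<chi> j. f' j h)) (at a)"
  apply (subst has_derivative_componentwise_within)
  apply (auto simp: Basis_vec_def inner_axis)
  apply (rule bounded_linear.has_derivative[OF bounded_linear_inner_left assms])
  done

locale hom_poly =
  fixes F :: "complex^3 \<Rightarrow> complex^3" and d :: nat and C :: "3 \<Rightarrow> nat \<times> nat \<times> nat \<Rightarrow> complex"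
  assumes F_nth: "\<And>z i. F z $ i = (\<Sum>e\<in>exps d. C i e * monom3 e z)"
begin

definition DF :: "complex^3 \<Rightarrow> complex^3 \<Rightarrow> complex^3" where
  "DF z w = (\<chi> i. \<Sum>e\<in>exps d. C i e * dmonom3 e z w)"

lemma F_has_derivative: "(F has_derivative DF z) (at z)"
proof -
  have F_eq: "F = (\<lambda>z. \<chi> i. \<Sum>e\<in>exps d. C i e * monom3 e z)"
    by (auto simp: vec_eq_iff F_nth)
  have "((\<lambda>z. \<chi> i. \<Sum>e\<in>exps d. C i e * monom3 e z) has_derivative DF z) (at z)"
    unfolding DF_def
    by (intro has_derivative_vec_lambda has_derivative_sum has_derivative_mult_right monom3_has_derivative)
  then show ?thesis unfolding F_eq .
qed

lemma frechet_derivative_F: "frechet_derivative F (at z) = DF z"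
  using frechet_derivative_at[OF F_has_derivative] by simp

lemma DF_add: "DF z (v + w) = DF z v + DF z w"
  by (simp add: DF_def vec_eq_iff dmonom3_add sum.distrib algebra_simps)

lemma DF_smult: "DF z (k *s w) = k *s DF z w"
  by (simp add: DF_def vec_eq_iff dmonom3_smult sum_distrib_left algebra_simps)

lemma DF_euler: "DF z z = of_nat d *s F z"
  by (simp add: DF_def vec_eq_iff F_nth dmonom3_euler sum_distrib_left algebra_simps cong: sum.cong)

lemma F_smult: "F (k *s z) = k^d *s F z"
  by (simp add: vec_eq_iff F_nth monom3_smult sum_distrib_left algebra_simps cong: sum.cong)

lemma DF_smult_base: "DF (k *s z) w = k^(d-1) *s DF z w"
  by (simp add: DF_def vec_eq_iff dmonom3_smult_base sum_distrib_left algebra_simps cong: sum.cong)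

lemma DF_degree_0:
  assumes "d = 0"
  shows "DF z w = 0"
proof -
  have "exps d = {(0,0,0)}" using assms by (auto simp: exps_def)
  then show ?thesis by (simp add: DF_def dmonom3_def vec_eq_iff)
qed

lemma fixed_smult_iff:
  assumes "k \<noteq> 0"
  shows "(\<exists>c. F (k *s z) = c *s (k *s z)) \<longleftrightarrow> (\<exists>c. F z = c *s z)"
proof
  assume "\<exists>c. F (k *s z) = c *s (k *s z)"
  then obtain c where "k^d *s F z = c *s (k *s z)" by (auto simp: F_smult)
  then have "F z = (c * k / k^d) *s z" using assms by (simp add: vec_eq_iff field_simps)
  then show "\<exists>c. F z = c *s z" by blast
next
  assume "\<exists>c. F z = c *s z"
  then obtain c where "F z = c *s z" by blast
  then have "F (k *s z) = (k^d * c / k) *s (k *s z)"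
    using assms by (simp add: F_smult vec_eq_iff field_simps)
  then show "\<exists>c. F (k *s z) = c *s (k *s z)" by blast
qed

lemma lin_at_add: "lin_at F p (v + w) = lin_at F p v + lin_at F p w"
  by (simp add: lin_at_def frechet_derivative_F DF_add vector_add_ldistrib)

lemma lin_at_smult: "lin_at F p (x *s v) = x *s lin_at F p v"
  by (simp add: lin_at_def frechet_derivative_F DF_smult vec_eq_iff algebra_simps)

lemma lin_at_smult_base:
  assumes "F z = c *s z" "z \<noteq> 0" "c \<noteq> 0" "k \<noteq> 0"
  shows "lin_at F (k *s z) w = inverse c *s DF z w"
proof (cases "d = 0")
  case True
  have "DF (k *s z) w = 0" "DF z w = 0" using DF_degree_0[OF True] by blast+
  then show ?thesis by (simp add: lin_at_def frechet_derivative_F)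
next
  case False
  then have "k^d = k^(d-1) * k" by (metis power_minus_mult neq0_conv)
  then have "F (k *s z) = (k^(d-1) * c) *s (k *s z)"
    by (simp add: F_smult assms(1) algebra_simps vec_eq_iff)
  moreover have "k *s z \<noteq> 0" using assms by (simp add: vector_mul_eq_0)
  ultimately have "fix_mult F (k *s z) = k^(d-1) * c" by (rule fix_mult_eq)
  then show ?thesis using assms by (simp add: lin_at_def frechet_derivative_F DF_smult_base vec_eq_iff)
qed

definition line_poly :: "complex^3 \<Rightarrow> complex^3 \<Rightarrow> complex^3 \<Rightarrow> complex poly" where
  "line_poly b u v = (\<Sum>i\<in>UNIV. \<Sum>e\<in>exps d. smult (b$i * C i e) (line_monom3 u v e))"

definition line_dpoly :: "complex^3 \<Rightarrow> complex^3 \<Rightarrow> complex^3 \<Rightarrow> complex^3 \<Rightarrow> complex poly" where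
  "line_dpoly b u v w = (\<Sum>i\<in>UNIV. \<Sum>e\<in>exps d. smult (b$i * C i e) (line_dmonom3 u v w e))"

lemma poly_line_poly: "poly (line_poly b u v) x = lf b (F (x *s u + v))"
  by (simp add: line_poly_def poly_sum poly_line_monom3 F_nth lf_def sum_distrib_left mult.assoc)

lemma degree_line_poly: "degree (line_poly b u v) \<le> d"
  unfolding line_poly_def
  by (intro degree_sum_le finite_exps order.trans[OF degree_smult_le] degree_line_monom3) auto

lemma coeff_line_poly: "coeff (line_poly b u v) d = lf b (F u)"
  by (simp add: line_poly_def coeff_sum coeff_line_monom3 F_nth lf_def sum_distrib_left mult.assoc
      cong: sum.cong)

lemma poly_pderiv_line_poly: "poly (pderiv (line_poly b u v)) x = lf b (DF (x *s u + v) u)"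
proof -
  have "((\<lambda>x. lf b (F (x *s u + v))) has_field_derivative lf b (DF (x *s u + v) u)) (at x)"
    unfolding lf_def F_nth DF_def vec_lambda_beta
    by (intro DERIV_sum DERIV_cmult monom3_line_has_field_derivative)
  moreover have "poly (line_poly b u v) = (\<lambda>x. lf b (F (x *s u + v)))"
    by (simp add: fun_eq_iff poly_line_poly)
  ultimately show ?thesis
    using poly_DERIV[of "line_poly b u v" x] DERIV_unique by metis
qed

lemma poly_line_dpoly: "poly (line_dpoly b u v w) x = lf b (DF (x *s u + v) w)"
  by (simp add: line_dpoly_def poly_sum poly_line_dmonom3 DF_def lf_def sum_distrib_left mult.assoc)

lemma degree_line_dpoly: "degree (line_dpoly b u v w) \<le> d"
  unfolding line_dpoly_def
  by (intro degree_sum_le finite_exps order.trans[OF degree_smult_le] coeff_line_dmonom3) auto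

lemma coeff_line_dpoly: "coeff (line_dpoly b u v w) d = 0"
  by (simp add: line_dpoly_def coeff_sum coeff_line_dmonom3 cong: sum.cong)

text \<open>\<open>lf a \<circ> F\<close> vanishes on the line \<open>x \<mapsto> x w + p\<close> except where it meets 0, so the polynomial
  \<open>line_poly a w p\<close> vanishes identically, and so does its derivative.\<close>

lemma lf_DF_eq_0_if_invariant:
  assumes inv: "\<forall>z. z \<noteq> 0 \<and> lf a z = 0 \<longrightarrow> lf a (F z) = 0"
    and p: "lf a p = 0" "p \<noteq> 0" and w: "lf a w = 0"
  shows "lf a (DF p w) = 0"
proof -
  have unique: "x = y" if "x *s w + p = 0" "y *s w + p = 0" for x y
  proof -
    have "(x - y) *s w = (x *s w + p) - (y *s w + p)" by (simp add: vector_sub_rdistrib)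
    then have "(x - y) *s w = 0" using that by simp
    then show "x = y" using that \<open>p \<noteq> 0\<close> by (auto simp: vector_mul_eq_0)
  qed
  have "finite {x. x *s w + p = 0}"
  proof (cases "{x. x *s w + p = 0} = {}")
    case False
    then obtain x0 where "x0 *s w + p = 0" by auto
    then have "{x. x *s w + p = 0} \<subseteq> {x0}" using unique by auto
    then show ?thesis using finite_subset by blast
  qed simp
  moreover have "{x. poly (line_poly a w p) x \<noteq> 0} \<subseteq> {x. x *s w + p = 0}"
    using inv p w by (auto simp: poly_line_poly lf_add lf_smult)
  ultimately have "line_poly a w p = 0"
    by (intro poly_eq_0_if_finite_nonroots) (rule finite_subset)
  then have "poly (pderiv (line_poly a w p)) 0 = 0" by simp
  then show ?thesis by (simp add: poly_pderiv_line_poly)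
qed

end

section \<open>An affine chart of the invariant line\<close>

locale line_frame = hom_poly +
  fixes a u1 u2 u3 :: "complex^3"
  assumes ccross_u1_u2: "ccross u1 u2 = a" and lf_u3: "lf a u3 = 1"
    and invariant: "\<forall>z. z \<noteq> 0 \<and> lf a z = 0 \<longrightarrow> lf a (F z) = 0"
    and F_nonzero: "\<forall>z. F z = 0 \<longrightarrow> z = 0"
begin

abbreviation "dual1 \<equiv> ccross u2 u3"
abbreviation "dual2 \<equiv> ccross u3 u1"

definition chart :: "complex \<Rightarrow> complex^3" where
  "chart x = x *s u1 + u2"

definition P_poly :: "complex poly" where "P_poly = line_poly dual1 u1 u2"
definition Q_poly :: "complex poly" where "Q_poly = line_poly dual2 u1 u2"
definition fix_poly :: "complex poly" where "fix_poly = pCons 0 Q_poly - P_poly"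
definition N_poly :: "complex poly" where "N_poly = line_dpoly a u1 u2 u3"

lemma dual_coords:
  "lf dual1 u1 = 1" "lf dual1 u2 = 0" "lf dual1 u3 = 0"
  "lf dual2 u1 = 0" "lf dual2 u2 = 1" "lf dual2 u3 = 0"
  "lf a u1 = 0" "lf a u2 = 0"
  using ccross_dual[of u1 u2 u3] ccross_u1_u2 lf_u3 by auto

lemma frame_decomp: "z = lf dual1 z *s u1 + lf dual2 z *s u2 + lf a z *s u3"
  using ccross_decomp[of u1 u2 u3 z] ccross_u1_u2 lf_u3 by simp

lemma frame_decomp_plane: "lf a z = 0 \<Longrightarrow> z = lf dual1 z *s u1 + lf dual2 z *s u2"
  using frame_decomp[of z] by simp

lemma chart_coords: "lf a (chart x) = 0" "lf dual1 (chart x) = x" "lf dual2 (chart x) = 1"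
  by (simp_all add: chart_def lf_add lf_smult dual_coords)

lemma chart_nonzero: "chart x \<noteq> 0"
  using chart_coords(3)[of x] by auto

lemma u1_nonzero: "u1 \<noteq> 0"
  using dual_coords(1) by auto

lemma F_chart: "F (chart x) = poly P_poly x *s u1 + poly Q_poly x *s u2"
proof -
  have "lf a (F (chart x)) = 0" using invariant chart_nonzero chart_coords by blast
  then show ?thesis
    using frame_decomp_plane[of "F (chart x)"] by (simp add: P_poly_def Q_poly_def poly_line_poly chart_def)
qed

lemma DF_chart_u1: "DF (chart x) u1 = poly (pderiv P_poly) x *s u1 + poly (pderiv Q_poly) x *s u2"
proof -
  have "lf a (DF (chart x) u1) = 0"
    using lf_DF_eq_0_if_invariant[OF invariant] chart_nonzero chart_coords dual_coords by blast
  then show ?thesis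
    using frame_decomp_plane[of "DF (chart x) u1"]
    by (simp add: P_poly_def Q_poly_def poly_pderiv_line_poly chart_def)
qed

lemma poly_fix_poly: "poly fix_poly x = x * poly Q_poly x - poly P_poly x"
  by (simp add: fix_poly_def)

lemma poly_pderiv_fix_poly:
  "poly (pderiv fix_poly) x = poly Q_poly x + x * poly (pderiv Q_poly) x - poly (pderiv P_poly) x"
  by (simp add: fix_poly_def pderiv_diff pderiv_pCons)

lemma F_chart_at_root: "poly fix_poly x = 0 \<Longrightarrow> F (chart x) = poly Q_poly x *s chart x"
  unfolding F_chart by (simp add: chart_def poly_fix_poly vec_eq_iff algebra_simps)

lemma fixed_iff_fix_poly_root: "(\<exists>c. F (chart x) = c *s chart x) \<longleftrightarrow> poly fix_poly x = 0"
proof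
  assume "\<exists>c. F (chart x) = c *s chart x"
  then obtain c where c: "F (chart x) = c *s chart x" by blast
  have "lf dual1 (F (chart x)) = poly P_poly x" "lf dual2 (F (chart x)) = poly Q_poly x"
    by (simp_all add: F_chart lf_lincomb dual_coords)
  then show "poly fix_poly x = 0" using c by (simp add: lf_smult chart_coords poly_fix_poly algebra_simps)
qed (use F_chart_at_root in blast)

lemma poly_Q_poly_at_root: "poly fix_poly x = 0 \<Longrightarrow> poly Q_poly x \<noteq> 0"
  using F_chart_at_root[of x] F_nonzero chart_nonzero by fastforce

lemma line_fixed_chart: "poly fix_poly x = 0 \<Longrightarrow> line_fixed a F (chart x)"
  unfolding line_fixed_def using chart_nonzero chart_coords F_chart_at_root by blast

lemma lin_at_chart:
  assumes "poly fix_poly x = 0" "k \<noteq> 0"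
  shows "lin_at F (k *s chart x) w = inverse (poly Q_poly x) *s DF (chart x) w"
  using lin_at_smult_base[OF F_chart_at_root chart_nonzero poly_Q_poly_at_root] assms by blast

lemma lin_at_chart_u1:
  assumes "poly fix_poly x = 0" "k \<noteq> 0"
  shows "lin_at F (k *s chart x) u1
    = (1 - poly (pderiv fix_poly) x / poly Q_poly x) *s u1 + (poly (pderiv Q_poly) x / poly Q_poly x) *s chart x"
  unfolding lin_at_chart[OF assms] DF_chart_u1 poly_pderiv_fix_poly
  using poly_Q_poly_at_root[OF assms(1)] by (simp add: chart_def vec_eq_iff field_simps)

lemma lin_at_chart_chart:
  assumes "poly fix_poly x = 0" "k \<noteq> 0"
  shows "lin_at F (k *s chart x) (chart x) = of_nat d *s chart x"
  unfolding lin_at_chart[OF assms] DF_euler F_chart_at_root[OF assms(1)]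
  using poly_Q_poly_at_root[OF assms(1)] by (simp add: vec_eq_iff field_simps)

lemma tangent_eig_chart:
  assumes "poly fix_poly x = 0"
  shows "tangent_eig a F (chart x) (1 - poly (pderiv fix_poly) x / poly Q_poly x)"
  unfolding tangent_eig_def
proof (intro exI conjI)
  show "lf a u1 = 0" by (rule dual_coords)
  show "\<not> (\<exists>t. u1 = t *s chart x)"
  proof
    assume "\<exists>t. u1 = t *s chart x"
    then obtain t where t: "u1 = t *s chart x" by blast
    have "t = lf dual2 (t *s chart x)" by (simp add: lf_smult chart_coords)
    also have "\<dots> = 0" using t dual_coords by simp
    finally have "t = 0" .
    then show False using t u1_nonzero by simp
  qed
  show "lin_at F (chart x) u1 = (1 - poly (pderiv fix_poly) x / poly Q_poly x) *s u1
      + (poly (pderiv Q_poly) x / poly Q_poly x) *s chart x"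
    using lin_at_chart_u1[OF assms, of 1] by simp
qed

lemma tangent_eig_chart_unique:
  assumes root: "poly fix_poly x = 0" and k: "k \<noteq> 0" and tangent: "tangent_eig a F (k *s chart x) l"
  shows "l = 1 - poly (pderiv fix_poly) x / poly Q_poly x"
proof -
  define lam where "lam = 1 - poly (pderiv fix_poly) x / poly Q_poly x"
  define B where "B = poly (pderiv Q_poly) x / poly Q_poly x"
  obtain v \<alpha> where v: "lf a v = 0" "\<not> (\<exists>t. v = t *s (k *s chart x))"
    "lin_at F (k *s chart x) v = l *s v + \<alpha> *s (k *s chart x)"
    using tangent unfolding tangent_eig_def by blast
  define \<gamma> where "\<gamma> = lf dual1 v - x * lf dual2 v"
  have v_coords: "v = \<gamma> *s u1 + lf dual2 v *s chart x"
    using frame_decomp_plane[OF v(1)] unfolding \<gamma>_def chart_def by (simp add: vec_eq_iff algebra_simps)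
  have "\<gamma> \<noteq> 0"
  proof
    assume "\<gamma> = 0"
    then have "v = (lf dual2 v / k) *s (k *s chart x)" using v_coords k by (simp add: vec_eq_iff)
    then show False using v(2) by blast
  qed
  have "lin_at F (k *s chart x) v = (\<gamma> * lam) *s u1 + (\<gamma> * B + lf dual2 v * of_nat d) *s chart x"
    by (subst v_coords) (simp add: lin_at_add lin_at_smult lin_at_chart_u1[OF root k]
        lin_at_chart_chart[OF root k] lam_def B_def vec_eq_iff algebra_simps)
  moreover have "l *s v + \<alpha> *s (k *s chart x) = (l * \<gamma>) *s u1 + (l * lf dual2 v + \<alpha> * k) *s chart x"
    by (subst v_coords) (simp add: vec_eq_iff algebra_simps)
  moreover have "lf dual1 (c1 *s u1 + c2 *s chart x) - x * lf dual2 (c1 *s u1 + c2 *s chart x) = c1"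
    for c1 c2
    by (simp add: lf_lincomb dual_coords chart_coords)
  ultimately have "\<gamma> * lam = l * \<gamma>" using v(3) by metis
  then show ?thesis using \<open>\<gamma> \<noteq> 0\<close> lam_def by simp
qed

lemma lf_lin_at_chart:
  assumes root: "poly fix_poly x = 0" and k: "k \<noteq> 0"
  shows "lf a (lin_at F (k *s chart x) y) = (poly N_poly x / poly Q_poly x) * lf a y"
proof -
  have "lf a (DF (chart x) u1) = 0" "lf a (DF (chart x) u2) = 0"
    using lf_DF_eq_0_if_invariant[OF invariant] chart_nonzero chart_coords dual_coords by blast+
  moreover have "poly N_poly x = lf a (DF (chart x) u3)"
    by (simp add: N_poly_def poly_line_dpoly chart_def)
  ultimately show ?thesis
    by (subst frame_decomp[of y])
       (simp add: lin_at_add lin_at_smult lf_add lf_smult lin_at_chart[OF root k] field_simps)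
qed

lemma eig_pair_chart:
  assumes root: "poly fix_poly x = 0" and k: "k \<noteq> 0"
    and tangent: "tangent_eig a F (k *s chart x) l" and pair: "eig_pair F (k *s chart x) l m"
  shows "m = poly N_poly x / poly Q_poly x"
proof -
  let ?p = "k *s chart x"
  obtain t \<beta> where t: "lf a t = 0" "\<not> (\<exists>s. t = s *s ?p)" "lin_at F ?p t = l *s t + \<beta> *s ?p"
    using tangent unfolding tangent_eig_def by blast
  obtain v w a11 a12 a21 a22 \<alpha> \<beta>' where
    ind: "\<forall>x y z::complex. x *s ?p + y *s v + z *s w = 0 \<longrightarrow> x = 0 \<and> y = 0 \<and> z = 0"
    and Lv: "lin_at F ?p v = \<alpha> *s ?p + a11 *s v + a21 *s w"
    and Lw: "lin_at F ?p w = \<beta>' *s ?p + a12 *s v + a22 *s w"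
    and trace: "a11 + a22 = l + m"
    using pair unfolding eig_pair_def by blast
  have Lp: "lin_at F ?p ?p = of_nat d *s ?p"
    by (simp add: lin_at_smult lin_at_chart_chart[OF root k] vec_eq_iff algebra_simps)
  have "lf a ?p = 0" by (simp add: lf_smult chart_coords)
  have "lf a u3 \<noteq> 0" using lf_u3 by simp
  have "a11 + a22 = l + poly N_poly x / poly Q_poly x"
    by (rule trace_induced_map[OF lin_at_add lin_at_smult Lp \<open>lf a ?p = 0\<close>
          lf_lin_at_chart[OF root k] \<open>lf a u3 \<noteq> 0\<close> t ind Lv Lw])
  then show ?thesis using trace by simp
qed

lemma fix_poly_rsquarefree:
  assumes simple: "\<forall>p l. line_fixed a F p \<and> tangent_eig a F p l \<longrightarrow> l \<noteq> 1"
  shows "rsquarefree fix_poly"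
  unfolding rsquarefree_roots
  using simple line_fixed_chart tangent_eig_chart by fastforce

lemma exists_nonfixed_chart_point:
  assumes "rsquarefree fix_poly"
  shows "\<exists>x. \<not> (\<exists>c. F (chart x) = c *s chart x)"
proof -
  have "fix_poly \<noteq> 0" using assms by (simp add: rsquarefree_def)
  then obtain x where "poly fix_poly x \<noteq> 0" using poly_all_0_iff_0 by blast
  then show ?thesis using fixed_iff_fix_poly_root by blast
qed

end

text \<open>The chart misses only \<open>[u1]\<close>; when that point is not fixed, it sees every fixed point.\<close>

locale line_chart = line_frame +
  assumes u1_not_fixed: "\<not> (\<exists>c. F u1 = c *s u1)"
begin

lemma coeff_Q_poly: "coeff Q_poly d \<noteq> 0"
proof
  assume "coeff Q_poly d = 0"
  then have "lf dual2 (F u1) = 0" by (simp add: Q_poly_def coeff_line_poly)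
  moreover have "lf a (F u1) = 0" using invariant u1_nonzero dual_coords by blast
  ultimately have "F u1 = lf dual1 (F u1) *s u1" using frame_decomp_plane[of "F u1"] by simp
  then show False using u1_not_fixed by blast
qed

lemma coeff_fix_poly: "coeff fix_poly (Suc d) = coeff Q_poly d"
  using degree_line_poly[of dual1 u1 u2] by (simp add: fix_poly_def P_poly_def coeff_eq_0)

lemma degree_fix_poly: "degree fix_poly = Suc d"
proof (rule antisym)
  have "degree (pCons 0 Q_poly) \<le> Suc d"
    using degree_line_poly[of dual2 u1 u2] by (cases "Q_poly = 0") (auto simp: Q_poly_def)
  moreover have "degree P_poly \<le> Suc d" using degree_line_poly[of dual1 u1 u2] by (simp add: P_poly_def)
  ultimately show "degree fix_poly \<le> Suc d" unfolding fix_poly_def by (rule degree_diff_le)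
  show "Suc d \<le> degree fix_poly" using coeff_Q_poly coeff_fix_poly by (metis le_degree)
qed

definition chart_coord :: "complex^3 \<Rightarrow> complex" where
  "chart_coord p = lf dual1 p / lf dual2 p"

lemma line_fixed_in_chart:
  assumes "line_fixed a F p"
  shows "lf dual2 p \<noteq> 0" "p = lf dual2 p *s chart (chart_coord p)" "poly fix_poly (chart_coord p) = 0"
proof -
  have p0: "p \<noteq> 0" and pa: "lf a p = 0" and fixed: "\<exists>c. F p = c *s p"
    using assms unfolding line_fixed_def by auto
  have p_coords: "p = lf dual1 p *s u1 + lf dual2 p *s u2" using frame_decomp_plane[OF pa] .
  show dual2: "lf dual2 p \<noteq> 0"
  proof
    assume "lf dual2 p = 0"
    then have p_u1: "p = lf dual1 p *s u1" and "lf dual1 p \<noteq> 0" using p_coords p0 by auto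
    moreover have "\<exists>c. F (lf dual1 p *s u1) = c *s (lf dual1 p *s u1)" using fixed p_u1 by metis
    ultimately show False using fixed_smult_iff u1_not_fixed by blast
  qed
  show p_chart: "p = lf dual2 p *s chart (chart_coord p)"
    using p_coords dual2 by (simp add: chart_def chart_coord_def vec_eq_iff field_simps)
  have "\<exists>c. F (lf dual2 p *s chart (chart_coord p)) = c *s (lf dual2 p *s chart (chart_coord p))"
    using fixed p_chart by metis
  then show "poly fix_poly (chart_coord p) = 0"
    unfolding fixed_smult_iff[OF dual2] fixed_iff_fix_poly_root .
qed

lemma bij_betw_chart_coord:
  assumes reps: "R \<subseteq> {p. line_fixed a F p}"
    and reps_all: "\<forall>q. line_fixed a F q \<longrightarrow> (\<exists>!p. p \<in> R \<and> proj_eq p q)"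
  shows "bij_betw chart_coord R {x. poly fix_poly x = 0}"
proof (rule bij_betwI')
  fix p p' assume p: "p \<in> R" and p': "p' \<in> R"
  show "(chart_coord p = chart_coord p') = (p = p')"
  proof
    assume eq: "chart_coord p = chart_coord p'"
    have fixed: "line_fixed a F p" "line_fixed a F p'" using p p' reps by auto
    note chart = line_fixed_in_chart[OF fixed(1)] and chart' = line_fixed_in_chart[OF fixed(2)]
    have "p' = (lf dual2 p' / lf dual2 p) *s p"
      by (subst chart(2), subst chart'(2)) (use chart(1) eq in \<open>simp add: field_simps\<close>)
    then have "proj_eq p p'" using fixed unfolding proj_eq_def line_fixed_def by blast
    moreover have "proj_eq p' p'" using fixed unfolding proj_eq_def line_fixed_def
      by (metis vector_smult_lid)
    ultimately show "p = p'" using reps_all reps p p' by blast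
  qed simp
next
  fix p assume "p \<in> R"
  then show "chart_coord p \<in> {x. poly fix_poly x = 0}" using reps line_fixed_in_chart(3) by blast
next
  fix x assume "x \<in> {x. poly fix_poly x = 0}"
  then obtain p where p: "p \<in> R" and "proj_eq p (chart x)" using reps_all line_fixed_chart by blast
  then obtain t where t: "chart x = t *s p" unfolding proj_eq_def by blast
  then have x: "x = t * lf dual1 p" "t * lf dual2 p = 1"
    using chart_coords[of x] by (simp_all add: lf_smult)
  then have "lf dual2 p \<noteq> 0" by auto
  then have "chart_coord p = x" using x by (simp add: chart_coord_def field_simps)
  then show "\<exists>p\<in>R. x = chart_coord p" using p by blast
qed

lemma index_in_chart:
  assumes p: "line_fixed a F p" and tangent: "tangent_eig a F p l" and pair: "eig_pair F p l m"
    and simple: "l \<noteq> 1"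
  shows "(1 - m) / (1 - l)
    = poly (Q_poly - N_poly) (chart_coord p) / poly (pderiv fix_poly) (chart_coord p)"
proof -
  define x where "x = chart_coord p"
  define k where "k = lf dual2 p"
  have root: "poly fix_poly x = 0" and k: "k \<noteq> 0" and p_chart: "p = k *s chart x"
    using line_fixed_in_chart[OF p] unfolding x_def k_def by auto
  have l: "l = 1 - poly (pderiv fix_poly) x / poly Q_poly x"
    using tangent_eig_chart_unique[OF root k] tangent p_chart by blast
  have m: "m = poly N_poly x / poly Q_poly x"
    using eig_pair_chart[OF root k] tangent pair p_chart by blast
  have "poly (pderiv fix_poly) x \<noteq> 0" using simple l by auto
  then show ?thesis
    unfolding l m x_def[symmetric] using poly_Q_poly_at_root[OF root] by (simp add: field_simps)
qed

theorem index_sum: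
  assumes simple: "\<forall>p l. line_fixed a F p \<and> tangent_eig a F p l \<longrightarrow> l \<noteq> 1"
    and reps: "R \<subseteq> {p. line_fixed a F p}"
    and reps_all: "\<forall>q. line_fixed a F q \<longrightarrow> (\<exists>!p. p \<in> R \<and> proj_eq p q)"
    and lam: "\<forall>p\<in>R. tangent_eig a F p (lam p)"
    and mu: "\<forall>p\<in>R. eig_pair F p (lam p) (mu p)"
  shows "finite R \<and> (\<Sum>p\<in>R. (1 - mu p) / (1 - lam p)) = 1"
proof
  have bij: "bij_betw chart_coord R {x. poly fix_poly x = 0}"
    using bij_betw_chart_coord[OF reps reps_all] .
  have "fix_poly \<noteq> 0" using degree_fix_poly by auto
  then show "finite R" using bij bij_betw_finite poly_roots_finite by blast
  have "(1 - mu p) / (1 - lam p)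
      = poly (Q_poly - N_poly) (chart_coord p) / poly (pderiv fix_poly) (chart_coord p)" if "p \<in> R" for p
    using that reps lam mu simple by (intro index_in_chart) blast+
  then have "(\<Sum>p\<in>R. (1 - mu p) / (1 - lam p))
      = (\<Sum>p\<in>R. poly (Q_poly - N_poly) (chart_coord p) / poly (pderiv fix_poly) (chart_coord p))"
    by (rule sum.cong[OF refl])
  also have "\<dots> = (\<Sum>x\<in>{x. poly fix_poly x = 0}. poly (Q_poly - N_poly) x / poly (pderiv fix_poly) x)"
    by (rule sum.reindex_bij_betw[OF bij])
  also have "\<dots> = coeff (Q_poly - N_poly) (degree fix_poly - 1) / lead_coeff fix_poly"
  proof (rule sum_roots_div_pderiv[OF fix_poly_rsquarefree[OF simple]])
    show "degree (Q_poly - N_poly) < degree fix_poly"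
      using degree_diff_le[OF degree_line_poly degree_line_dpoly] degree_fix_poly
      by (simp add: Q_poly_def N_poly_def le_imp_less_Suc)
  qed
  also have "\<dots> = coeff (Q_poly - N_poly) d / coeff Q_poly d"
    using degree_fix_poly coeff_fix_poly by simp
  also have "\<dots> = 1"
    using coeff_Q_poly by (simp add: N_poly_def coeff_line_dpoly)
  finally show "(\<Sum>p\<in>R. (1 - mu p) / (1 - lam p)) = 1" .
qed

end

theorem mainTheorem5:
  fixes F :: "complex^3 \<Rightarrow> complex^3" and d :: nat and a :: "complex^3"
    and P :: "(complex^3) set" and lam mu :: "complex^3 \<Rightarrow> complex"
  assumes holo: "holo_P2_lift d F"
    and line: "a \<noteq> 0"
    and inv: "\<forall>z. z \<noteq> 0 \<and> lf a z = 0 \<longrightarrow> lf a (F z) = 0"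
    and simple: "\<forall>p l. line_fixed a F p \<and> tangent_eig a F p l \<longrightarrow> l \<noteq> 1"
    and reps: "P \<subseteq> {p. line_fixed a F p}"
    and reps_all: "\<forall>q. line_fixed a F q \<longrightarrow> (\<exists>!p. p \<in> P \<and> proj_eq p q)"
    and lam: "\<forall>p\<in>P. tangent_eig a F p (lam p)"
    and mu: "\<forall>p\<in>P. eig_pair F p (lam p) (mu p)"
  shows "finite P \<and> (\<Sum>p\<in>P. (1 - mu p) / (1 - lam p)) = 1"
proof -
  obtain C where F_nth: "\<And>z i. F z $ i = (\<Sum>e\<in>exps d. C i e * monom3 e z)"
    using holo unfolding holo_P2_lift_def hom_poly_map_def by blast
  have F_nonzero: "\<forall>z. F z = 0 \<longrightarrow> z = 0" using holo unfolding holo_P2_lift_def by blast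
  obtain u1 u2 u3 where frame: "ccross u1 u2 = a" "lf a u3 = 1"
    using exists_ccross_frame[OF line] by blast
  interpret frame: line_frame F d C a u1 u2 u3
    by unfold_locales (use F_nth frame inv F_nonzero in auto)
  obtain x where not_fixed: "\<not> (\<exists>c. F (frame.chart x) = c *s frame.chart x)"
    using frame.exists_nonfixed_chart_point[OF frame.fix_poly_rsquarefree[OF simple]] by blast
  txt \<open>Replacing \<open>u1, u2\<close> by \<open>chart x, - u1\<close> keeps \<open>ccross u1 u2 = a\<close> and puts the non-fixed point at \<open>[u1]\<close>.\<close>
  interpret line_chart F d C a "frame.chart x" "- u1" u3
    by unfold_locales
      (use F_nth frame inv F_nonzero not_fixed in \<open>auto simp: frame.chart_def ccross_affine_shift\<close>)
  show ?thesis by (rule index_sum[OF simple reps reps_all lam mu])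
qed

end
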